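(* Let $x_e$ ($e\ge1$) be indeterminates and set $x_0=1$. Then in $\mathbb{Z}[x_1,x_2,\dots][[t]]$, $$\sum_{n=0}^\infty\sum_{\sigma\in\mathcal{S}(n)}N_\sigma\Big(\prod_{1^e\in\sigma}x_e\Big)t^n=\Big(\sum_{n=0}^\infty x_nt^n\Big)^p(1-t)^p(1-pt)^{-1},$$ where the product runs over the symbols of $\sigma$ of the form $1^e$ (i.e. with $d_j=1$), counted with multiplicity.
   Context: Fix a prime $p$. A splitting type of degree $n$ is a finite multiset $\sigma=(d_1^{e_1}\,d_2^{e_2}\cdots d_t^{e_t})$ of symbols $d_j^{e_j}$ with $d_j,e_j$ positive integers and $\sum_j d_je_j=n$; $\mathcal{S}(n)$ denotes the set of splitting types of degree $n$ ($\mathcal{S}(0)$ consists of the empty type). A monic $f\in\mathbb{F}_p[x]$ of degree $n$ has splitting type $\sigma$ if $f=\prod_{j=1}^tf_j^{e_j}$ with $f_j$ distinct monic irreducible polynomials with $\deg f_j=d_j$. $N_\sigma$ is the number of monic polynomials in $\mathbb{F}_p[x]$ of splitting type $\sigma$. *)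

theory Defs
  imports "HOL-Library.Multiset" "HOL-Library.Poly_Mapping"
    "HOL-Computational_Algebra.Polynomial" "HOL-Computational_Algebra.Formal_Power_Series"
begin

text \<open>Splitting types of degree n: multisets of symbols (d, e), read as d^e, with d, e > 0
  and sum of d*e equal to n.\<close>
definition splitting_types :: "nat \<Rightarrow> (nat \<times> nat) multiset set" where
  "splitting_types n = {\<sigma>. (\<forall>(d,e) \<in># \<sigma>. 0 < d \<and> 0 < e) \<and> (\<Sum>(d,e) \<in># \<sigma>. d * e) = n}"

definition has_splitting_type :: "'a::field poly \<Rightarrow> (nat \<times> nat) multiset \<Rightarrow> bool" where
  "has_splitting_type f \<sigma> \<longleftrightarrow> lead_coeff f = 1 \<and>
     (\<exists>F :: ('a poly \<times> nat) set. finite F \<and> inj_on fst F \<and>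
        (\<forall>(g,e) \<in> F. lead_coeff g = 1 \<and> irreducible g \<and> 0 < e) \<and>
        f = (\<Prod>(g,e) \<in> F. g ^ e) \<and>
        \<sigma> = image_mset (\<lambda>(g,e). (degree g, e)) (mset_set F))"

text \<open>N_sigma over the finite field 'a (instantiated with the field with p elements).\<close>
definition N_split :: "'a::field itself \<Rightarrow> (nat \<times> nat) multiset \<Rightarrow> nat" where
  "N_split _ \<sigma> = card {f :: 'a poly. has_splitting_type f \<sigma>}"

text \<open>Z[x_1, x_2, ...] as finitely supported functions from monomials monomials to int.\<close>
type_synonym zpoly = "(nat \<Rightarrow>\<^sub>0 nat) \<Rightarrow>\<^sub>0 int"

definition xvar :: "nat \<Rightarrow> zpoly" where
  "xvar e = (if e = 0 then 1 else Poly_Mapping.single (Poly_Mapping.single e 1) 1)"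

end

theory Submission
  imports Defs "Berlekamp_Zassenhaus.Poly_Mod"
begin

text \<open>The weight of a monic \<open>f\<close> only sees the roots of \<open>f\<close>: its degree-one irreducible factors
  are the \<open>X - a\<close>, each with exponent the multiplicity of the root \<open>a\<close>. So let \<open>R\<^sub>C\<close> be the
  generating function of the monic polynomials all of whose roots lie in \<open>C\<close>, each weighted by
  the product of \<open>x\<^sub>m\<close> over \<open>a \<in> C\<close>, where \<open>m\<close> is the multiplicity of \<open>a\<close>. Splitting off the
  factor \<open>(X - b)\<^sup>m\<close> gives \<open>R\<^bsub>C \<union> {b}\<^esub> = (\<Sum> x\<^sub>n t\<^sup>n) R\<^sub>C\<close>, hence \<open>R\<^sub>F = (\<Sum> x\<^sub>n t\<^sup>n)\<^sup>p R\<^sub>\<emptyset>\<close>, and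
  \<open>R\<^sub>\<emptyset>\<close> does not involve the \<open>x\<^sub>n\<close>. Setting all \<open>x\<^sub>n = 1\<close>, where \<open>R\<^sub>F\<close> counts the \<open>p\<^sup>n\<close> monic
  polynomials of degree \<open>n\<close>, gives \<open>R\<^sub>\<emptyset> = (1 - t)\<^sup>p / (1 - p t)\<close>.\<close>

text \<open>The import brings in HOL-Algebra, whose \<open>order\<close> of a group element would otherwise shadow
  the root multiplicity \<open>order\<close> of polynomials.\<close>
hide_const (open) Coset.order

definition monic_factors :: "'a::field poly \<Rightarrow> 'a poly multiset" where
  "monic_factors f = (THE P. f = prod_mset P \<and> set_mset P \<subseteq> {q. irreducible q \<and> monic q})"

lemma monic_factors:
  fixes f :: "'a::field poly"
  assumes "monic f"
  shows "prod_mset (monic_factors f) = f" "set_mset (monic_factors f) \<subseteq> {q. irreducible q \<and> monic q}"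
  using theI'[OF exactly_one_monic_factorization[OF assms]] by (simp_all add: monic_factors_def)

lemma monic_factors_prod_mset:
  fixes P :: "'a::field poly multiset"
  assumes "set_mset P \<subseteq> {q. irreducible q \<and> monic q}"
  shows "monic_factors (prod_mset P) = P"
proof -
  have "monic (prod_mset P)" using assms by (intro monic_prod_mset) auto
  from monic_factors[OF this] assms show ?thesis by (intro monic_factorization_unique_mset) simp_all
qed

definition count_graph :: "'b multiset \<Rightarrow> ('b \<times> nat) set" where
  "count_graph P = (\<lambda>x. (x, count P x)) ` set_mset P"

lemma inj_on_count_graph: "inj_on (\<lambda>x. (x, count P x)) (set_mset P)"
  by (rule inj_onI) simp

lemma finite_count_graph [simp]: "finite (count_graph P)"
  by (simp add: count_graph_def)

lemma inj_on_fst_count_graph: "inj_on fst (count_graph P)"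
  by (auto simp: count_graph_def inj_on_def)

lemma prod_count_graph: "(\<Prod>(g,e)\<in>count_graph P. g ^ e) = prod_mset (P :: 'b::comm_monoid_mult multiset)"
  by (simp add: count_graph_def prod.reindex[OF inj_on_count_graph] prod_mset_multiplicity)

lemma count_graph_exists:
  assumes "finite F" "inj_on fst F" "\<forall>(x,e)\<in>F. 0 < e"
  shows "\<exists>P. F = count_graph P"
  using assms
proof (induction F rule: finite_induct)
  case empty
  show ?case by (simp add: count_graph_def)
next
  case (insert xe F)
  obtain x e where xe: "xe = (x, e)" by (cases xe)
  obtain P where P: "F = count_graph P" using insert by auto
  have "x \<notin># P"
  proof
    assume "x \<in># P"
    hence "(x, count P x) \<in> F" by (simp add: P count_graph_def)
    hence "(x, count P x) = xe"
      using inj_onD[OF insert.prems(1), of "(x, count P x)" xe] xe by simp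
    with \<open>(x, count P x) \<in> F\<close> insert.hyps(2) show False by simp
  qed
  moreover have "0 < e" using insert.prems(2) xe by simp
  ultimately have "count_graph (P + replicate_mset e x) = insert (x, e) (count_graph P)"
    unfolding count_graph_def by (auto simp: image_iff split: if_splits)
  thus ?case using P xe by blast
qed

definition type_of_factors :: "'a::zero poly multiset \<Rightarrow> (nat \<times> nat) multiset" where
  "type_of_factors P = image_mset (\<lambda>(g,e). (degree g, e)) (mset_set (count_graph P))"

lemma has_splitting_type_iff_factors:
  fixes f :: "'a::field poly"
  shows "has_splitting_type f \<sigma> \<longleftrightarrow>
    (\<exists>P. set_mset P \<subseteq> {q. irreducible q \<and> monic q} \<and> f = prod_mset P \<and> \<sigma> = type_of_factors P)"
proof
  assume "has_splitting_type f \<sigma>"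
  then obtain F where "finite F" "inj_on fst F" and F: "\<forall>(g,e)\<in>F. monic g \<and> irreducible g \<and> 0 < e"
    and f: "f = (\<Prod>(g,e)\<in>F. g ^ e)" and \<sigma>: "\<sigma> = image_mset (\<lambda>(g,e). (degree g, e)) (mset_set F)"
    unfolding has_splitting_type_def by blast
  have "\<forall>(g,e)\<in>F. 0 < e" using F by auto
  then obtain P where P: "F = count_graph P"
    using count_graph_exists \<open>finite F\<close> \<open>inj_on fst F\<close> by blast
  have "set_mset P \<subseteq> {q. irreducible q \<and> monic q}"
  proof
    fix g assume "g \<in># P"
    hence "(g, count P g) \<in> F" by (simp add: P count_graph_def)
    with F show "g \<in> {q. irreducible q \<and> monic q}" by auto
  qed
  moreover have "f = prod_mset P" using f by (simp add: P prod_count_graph)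
  moreover have "\<sigma> = type_of_factors P" using \<sigma> by (simp add: P type_of_factors_def)
  ultimately show "\<exists>P. set_mset P \<subseteq> {q. irreducible q \<and> monic q} \<and> f = prod_mset P \<and> \<sigma> = type_of_factors P"
    by blast
next
  assume "\<exists>P. set_mset P \<subseteq> {q. irreducible q \<and> monic q} \<and> f = prod_mset P \<and> \<sigma> = type_of_factors P"
  then obtain P where P: "set_mset P \<subseteq> {q. irreducible q \<and> monic q}" and f: "f = prod_mset P"
    and \<sigma>: "\<sigma> = type_of_factors P" by blast
  have "monic f" unfolding f using P by (intro monic_prod_mset) auto
  moreover have "\<forall>(g,e)\<in>count_graph P. monic g \<and> irreducible g \<and> 0 < e"
    using P by (auto simp: count_graph_def)
  moreover have "f = (\<Prod>(g,e)\<in>count_graph P. g ^ e)" by (simp add: f prod_count_graph)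
  moreover have "\<sigma> = image_mset (\<lambda>(g,e). (degree g, e)) (mset_set (count_graph P))"
    by (simp add: \<sigma> type_of_factors_def)
  ultimately show "has_splitting_type f \<sigma>"
    unfolding has_splitting_type_def
    by (intro conjI exI[of _ "count_graph P"]) (simp_all add: inj_on_fst_count_graph)
qed

definition splitting_type :: "'a::field poly \<Rightarrow> (nat \<times> nat) multiset" where
  "splitting_type f = type_of_factors (monic_factors f)"

lemma has_splitting_type_iff:
  fixes f :: "'a::field poly"
  shows "has_splitting_type f \<sigma> \<longleftrightarrow> monic f \<and> \<sigma> = splitting_type f"
proof
  assume "has_splitting_type f \<sigma>"
  then obtain P where P: "set_mset P \<subseteq> {q. irreducible q \<and> monic q}"
    and f: "f = prod_mset P" and \<sigma>: "\<sigma> = type_of_factors P"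
    by (auto simp: has_splitting_type_iff_factors)
  have "monic f" unfolding f using P by (intro monic_prod_mset) auto
  moreover have "monic_factors f = P" unfolding f using P by (rule monic_factors_prod_mset)
  ultimately show "monic f \<and> \<sigma> = splitting_type f" using \<sigma> by (simp add: splitting_type_def)
next
  assume "monic f \<and> \<sigma> = splitting_type f"
  with monic_factors[of f] show "has_splitting_type f \<sigma>"
    unfolding has_splitting_type_iff_factors splitting_type_def
    by (intro exI[of _ "monic_factors f"]) simp
qed

lemma monic_irreducible_root_eq:
  fixes g :: "'a::field poly"
  assumes "monic g" "irreducible g" "poly g a = 0"
  shows "g = [:-a, 1:]"
proof (rule poly_dvd_antisym)
  show "[:-a, 1:] dvd g" using assms(3) by (simp add: poly_eq_0_iff_dvd)
  moreover have "\<not> is_unit [:-a, 1::'a:]" by (simp add: is_unit_iff_degree)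
  ultimately show "g dvd [:-a, 1:]" using irreducibleD'[OF assms(2)] by blast
qed (use assms(1) in simp)

lemma order_monic_irreducible:
  fixes g :: "'a::field poly"
  assumes "monic g" "irreducible g"
  shows "order a g = (if g = [:-a, 1:] then 1 else 0)"
proof (cases "poly g a = 0")
  case True
  then have "g = [:-a, 1:]" using assms monic_irreducible_root_eq by blast
  then show ?thesis using order_power_n_n[of a 1] by simp
qed (auto intro: order_0I)

lemma order_prod_monic_irreducibles:
  fixes P :: "'a::field poly multiset"
  assumes "set_mset P \<subseteq> {q. irreducible q \<and> monic q}"
  shows "order a (prod_mset P) = count P [:-a, 1:]"
  using assms
proof (induction P)
  case (add g P)
  have "prod_mset P \<noteq> 0" using add.prems by (auto simp: prod_mset_zero_iff)
  moreover have "g \<noteq> 0" using add.prems by auto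
  ultimately show ?case using add by (simp add: order_mult order_monic_irreducible)
qed simp

lemma type_of_factors_in_splitting_types:
  fixes P :: "'a::field poly multiset"
  assumes P: "set_mset P \<subseteq> {q. irreducible q \<and> monic q}"
  shows "type_of_factors P \<in> splitting_types (degree (prod_mset P))"
proof -
  have nonzero: "g \<noteq> 0" if "(g, e) \<in> count_graph P" for g e
    using that P by (auto simp: count_graph_def)
  have "0 < degree g" if "g \<in># P" for g
    using that P irreducible_not_unit[of g] by (fastforce simp: is_unit_iff_degree)
  then have positive: "\<forall>(d,e)\<in>#type_of_factors P. 0 < d \<and> 0 < e"
    by (auto simp: type_of_factors_def count_graph_def)
  have "(\<Sum>(d,e)\<in>#type_of_factors P. d * e) = (\<Sum>(g,e)\<in>count_graph P. degree (g ^ e))"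
    using nonzero by (auto simp: type_of_factors_def sum_unfold_sum_mset multiset.map_comp o_def
        degree_power_eq intro!: arg_cong[where f = sum_mset] image_mset_cong)
  also have "\<dots> = degree (\<Prod>(g,e)\<in>count_graph P. g ^ e)"
    using nonzero by (subst degree_prod_sum_eq) (auto simp: split_beta)
  finally show ?thesis using positive by (simp add: splitting_types_def prod_count_graph)
qed

definition linear_weight :: "(nat \<Rightarrow> 'b::comm_monoid_mult) \<Rightarrow> (nat \<times> nat) multiset \<Rightarrow> 'b" where
  "linear_weight y \<sigma> = prod_mset (image_mset (\<lambda>(d,e). y e) (filter_mset (\<lambda>(d,e). d = 1) \<sigma>))"

lemma linear_weight_type_of_factors:
  fixes P :: "'a::{field,finite} poly multiset" and y :: "nat \<Rightarrow> 'b::comm_monoid_mult"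
  assumes "y 0 = 1" and P: "set_mset P \<subseteq> {q. irreducible q \<and> monic q}"
  shows "linear_weight y (type_of_factors P) = (\<Prod>a\<in>UNIV. y (order a (prod_mset P)))"
proof -
  have linear_factors: "{g \<in> set_mset P. degree g = 1} = (\<lambda>a. [:-a, 1:]) ` {a. [:-a, 1:] \<in># P}"
  proof safe
    fix g assume "g \<in># P" "degree g = 1"
    then obtain b c where "g = [:b, c:]" "c \<noteq> 0" using degree1_coeffs by blast
    moreover have "c = 1" using P \<open>g \<in># P\<close> calculation by auto
    ultimately show "g \<in> (\<lambda>a. [:-a, 1:]) ` {a. [:-a, 1:] \<in># P}"
      using \<open>g \<in># P\<close> by (intro image_eqI[of _ _ "-b"]) auto
  qed auto
  have "linear_weight y (type_of_factors P) = (\<Prod>g\<in>{g \<in> set_mset P. degree g = 1}. y (count P g))"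
    by (simp add: linear_weight_def type_of_factors_def count_graph_def filter_mset_image_mset
        image_mset_mset_set[OF inj_on_count_graph, symmetric] multiset.map_comp o_def
        prod_unfold_prod_mset)
  also have "\<dots> = (\<Prod>a\<in>{a. [:-a, 1:] \<in># P}. y (count P [:-a, 1:]))"
    unfolding linear_factors by (rule prod.reindex_cong[where l = "\<lambda>a. [:-a, 1:]"]) (auto intro: inj_onI)
  also have "\<dots> = (\<Prod>a\<in>UNIV. y (count P [:-a, 1:]))"
    using \<open>y 0 = 1\<close> by (intro prod.mono_neutral_left) (auto simp: not_in_iff)
  finally show ?thesis by (simp add: order_prod_monic_irreducibles[OF P])
qed

lemma splitting_type_in_splitting_types:
  "monic (f :: 'a::field poly) \<Longrightarrow> splitting_type f \<in> splitting_types (degree f)"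
  using type_of_factors_in_splitting_types[of "monic_factors f"] monic_factors[of f]
  by (simp add: splitting_type_def)

lemma linear_weight_splitting_type:
  fixes f :: "'a::{field,finite} poly" and y :: "nat \<Rightarrow> 'b::comm_monoid_mult"
  assumes "y 0 = 1" "monic f"
  shows "linear_weight y (splitting_type f) = (\<Prod>a\<in>UNIV. y (order a f))"
  using linear_weight_type_of_factors[of y "monic_factors f"] monic_factors[OF assms(2)] assms(1)
  by (simp add: splitting_type_def)

lemma finite_splitting_types: "finite (splitting_types n)"
proof (rule finite_subset)
  show "splitting_types n \<subseteq> (\<Union>k\<le>n. multisets_of_size ({1..n} \<times> {1..n}) k)"
  proof
    fix \<sigma> assume "\<sigma> \<in> splitting_types n"
    then have pos: "\<forall>(d,e)\<in>#\<sigma>. 0 < d \<and> 0 < e" and sum: "(\<Sum>(d,e)\<in>#\<sigma>. d * e) = n"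
      by (auto simp: splitting_types_def)
    have "set_mset \<sigma> \<subseteq> {1..n} \<times> {1..n}"
    proof
      fix x assume "x \<in># \<sigma>"
      moreover obtain d e where x: "x = (d, e)" by (cases x)
      ultimately have "0 < d" "0 < e" "d * e \<le> n"
        using pos sum multi_member_split[of x \<sigma>] by auto
      moreover have "d \<le> d * e" "e \<le> d * e" using \<open>0 < d\<close> \<open>0 < e\<close> by simp_all
      ultimately have "0 < d" "0 < e" "d \<le> n" "e \<le> n" by linarith+
      then show "x \<in> {1..n} \<times> {1..n}" using x by simp
    qed
    moreover have "size \<sigma> \<le> n"
    proof -
      have "size \<sigma> = (\<Sum>x\<in>#\<sigma>. 1)" by (rule size_eq_sum_mset)
      also have "\<dots> \<le> (\<Sum>(d,e)\<in>#\<sigma>. d * e)" using pos by (intro sum_mset_mono) auto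
      finally show ?thesis using sum by simp
    qed
    ultimately show "\<sigma> \<in> (\<Union>k\<le>n. multisets_of_size ({1..n} \<times> {1..n}) k)"
      by (auto simp: multisets_of_size_def)
  qed
qed auto

definition monic_with_roots_in :: "'a::field set \<Rightarrow> nat \<Rightarrow> 'a poly set" where
  "monic_with_roots_in C n = {f. monic f \<and> degree f = n \<and> (\<forall>a. poly f a = 0 \<longrightarrow> a \<in> C)}"

lemma monic_with_roots_inD:
  assumes "f \<in> monic_with_roots_in C n"
  shows "monic f" "degree f = n" "poly f a = 0 \<Longrightarrow> a \<in> C"
  using assms unfolding monic_with_roots_in_def by blast+

lemma monic_with_roots_in_UNIV_Suc:
  "monic_with_roots_in (UNIV :: 'a::field set) (Suc n) =
     (\<lambda>(a, g). pCons a g) ` (UNIV \<times> monic_with_roots_in UNIV n)"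
proof safe
  fix f :: "'a poly" assume f: "f \<in> monic_with_roots_in UNIV (Suc n)"
  obtain a g where fg: "f = pCons a g" by (rule pCons_cases)
  with f have "g \<noteq> 0" by (auto simp: monic_with_roots_in_def)
  with f have "g \<in> monic_with_roots_in UNIV n" unfolding fg by (auto simp: monic_with_roots_in_def)
  with fg show "f \<in> (\<lambda>(a, g). pCons a g) ` (UNIV \<times> monic_with_roots_in UNIV n)" by force
next
  fix a and g :: "'a poly" assume "g \<in> monic_with_roots_in UNIV n"
  then have "monic g" "degree g = n" "g \<noteq> 0" by (auto simp: monic_with_roots_in_def)
  then show "pCons a g \<in> monic_with_roots_in UNIV (Suc n)" by (simp add: monic_with_roots_in_def)
qed

lemma card_monic_with_roots_in_UNIV:
  "card (monic_with_roots_in (UNIV :: 'a::{field,finite} set) n) = card (UNIV :: 'a set) ^ n"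
proof (induction n)
  case 0
  have "monic_with_roots_in (UNIV :: 'a set) 0 = {1}"
    by (auto simp: monic_with_roots_in_def elim!: degree_eq_zeroE)
  then show ?case by simp
next
  case (Suc n)
  have "inj_on (\<lambda>(a, g). pCons a g) (UNIV \<times> monic_with_roots_in (UNIV :: 'a set) n)"
    by (rule inj_onI) auto
  then show ?case by (simp add: monic_with_roots_in_UNIV_Suc card_image card_cartesian_product Suc)
qed

lemma finite_monic_with_roots_in: "finite (monic_with_roots_in (C :: 'a::{field,finite} set) n)"
proof (rule finite_subset)
  show "finite (monic_with_roots_in (UNIV :: 'a set) n)"
    by (intro card_ge_0_finite) (simp add: card_monic_with_roots_in_UNIV finite_UNIV_card_ge_0)
qed (auto simp: monic_with_roots_in_def)

lemma order_linear_power_mult: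
  fixes g :: "'a::field poly"
  assumes "g \<noteq> 0"
  shows "order a ([:-b, 1:] ^ i * g) = (if a = b then i else 0) + order a g"
proof -
  have "order a ([:-b, 1:] ^ i) = (if a = b then i else 0)"
    using order_power_n_n[of b i] by (auto intro: order_0I simp: poly_power)
  with assms show ?thesis by (simp add: order_mult)
qed

lemma linear_power_mult_in_monic_with_roots_in:
  fixes g :: "'a::field poly"
  assumes "g \<in> monic_with_roots_in C m"
  shows "[:-b, 1:] ^ i * g \<in> monic_with_roots_in (insert b C) (i + m)"
proof -
  have lin: "monic ([:-b, 1:] ^ i)" "degree ([:-b, 1:] ^ i) = i"
    by (rule monic_power, simp) (rule degree_linear_power)
  have g: "monic g" "degree g = m" "\<forall>a. poly g a = 0 \<longrightarrow> a \<in> C"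
    using assms by (auto simp: monic_with_roots_in_def)
  have "monic ([:-b, 1:] ^ i * g)" using lin(1) g(1) by (rule monic_mult)
  moreover have "degree ([:-b, 1:] ^ i * g) = i + m"
    using degree_monic_mult[OF lin(1), of g] lin(2) g by fastforce
  moreover have "\<forall>a. poly ([:-b, 1:] ^ i * g) a = 0 \<longrightarrow> a \<in> insert b C"
    using g(3) by (simp add: poly_power)
  ultimately show ?thesis unfolding monic_with_roots_in_def by blast
qed

lemma monic_with_roots_in_insert_decompose:
  fixes f :: "'a::field poly"
  assumes f: "f \<in> monic_with_roots_in (insert b C) n"
  defines "i \<equiv> order b f"
  shows "f = [:-b, 1:] ^ i * (f div [:-b, 1:] ^ i)" and "i \<le> n"
    and "f div [:-b, 1:] ^ i \<in> monic_with_roots_in C (n - i)"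
proof -
  define g where "g = f div [:-b, 1:] ^ i"
  show fg: "f = [:-b, 1:] ^ i * (f div [:-b, 1:] ^ i)"
    using order_1[of b f] unfolding i_def by simp
  have "f \<noteq> 0" "monic f" "degree f = n" "\<forall>a. poly f a = 0 \<longrightarrow> a \<in> insert b C"
    using f by (auto simp: monic_with_roots_in_def)
  then show "i \<le> n" unfolding i_def using order_degree by blast
  have lin: "monic ([:-b, 1:] ^ i)" "degree ([:-b, 1:] ^ i) = i"
    by (rule monic_power, simp) (rule degree_linear_power)
  have "g \<noteq> 0" using fg \<open>f \<noteq> 0\<close> by (auto simp: g_def)
  then have "order b g = 0" using order_linear_power_mult[of g b b i] fg by (simp add: g_def i_def)
  then have "poly g b \<noteq> 0" using \<open>g \<noteq> 0\<close> by (simp add: order_root)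
  moreover have "poly f a = 0" if "poly g a = 0" for a
    using that by (subst fg) (simp add: g_def)
  ultimately have "\<forall>a. poly g a = 0 \<longrightarrow> a \<in> C"
    using \<open>\<forall>a. poly f a = 0 \<longrightarrow> a \<in> insert b C\<close> by blast
  moreover have "monic g" using monic_factor[of "[:-b, 1:] ^ i" g] \<open>monic f\<close> fg lin by (simp add: g_def)
  moreover have "degree g = n - i"
    using degree_monic_mult[OF lin(1) \<open>g \<noteq> 0\<close>] \<open>degree f = n\<close> fg lin(2) by (simp add: g_def)
  ultimately show "g \<in> monic_with_roots_in C (n - i)" by (auto simp: monic_with_roots_in_def)
qed

lemma bij_betw_linear_power_mult:
  fixes C :: "'a::field set"
  assumes "b \<notin> C"
  shows "bij_betw (\<lambda>(i, g). [:-b, 1:] ^ i * g) (SIGMA i:{..n}. monic_with_roots_in C (n - i))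
           (monic_with_roots_in (insert b C) n)"
proof -
  define mult where "mult = (\<lambda>(i, g). [:-b, 1:] ^ i * g)"
  define split where "split = (\<lambda>f. (order b f, f div [:-b, 1:] ^ order b f))"
  have "split (mult (i, g)) = (i, g)" if "g \<in> monic_with_roots_in C m" for i g m
  proof -
    have "g \<noteq> 0" "poly g b \<noteq> 0" using that assms by (auto simp: monic_with_roots_in_def)
    then show ?thesis
      unfolding mult_def split_def case_prod_conv order_linear_power_mult[OF \<open>g \<noteq> 0\<close>]
      by (simp add: order_0I)
  qed
  moreover have "mult (split f) = f" if "f \<in> monic_with_roots_in (insert b C) n" for f
    using monic_with_roots_in_insert_decompose(1)[OF that] by (simp add: mult_def split_def)
  moreover have "mult (i, g) \<in> monic_with_roots_in (insert b C) n"
    if "i \<le> n" "g \<in> monic_with_roots_in C (n - i)" for i g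
    using linear_power_mult_in_monic_with_roots_in[OF that(2), of b i] that(1) by (simp add: mult_def)
  moreover have "split ` monic_with_roots_in (insert b C) n
                   \<subseteq> (SIGMA i:{..n}. monic_with_roots_in C (n - i))"
    using monic_with_roots_in_insert_decompose(2,3) by (fastforce simp: split_def)
  ultimately have "bij_betw mult (SIGMA i:{..n}. monic_with_roots_in C (n - i))
                     (monic_with_roots_in (insert b C) n)"
    by (intro bij_betw_byWitness[where f' = split]) fastforce+
  then show ?thesis by (simp add: mult_def)
qed

definition root_multiplicity_fps :: "(nat \<Rightarrow> 'b::comm_ring_1) \<Rightarrow> 'a::field set \<Rightarrow> 'b fps" where
  "root_multiplicity_fps y C = Abs_fps (\<lambda>n. \<Sum>f\<in>monic_with_roots_in C n. \<Prod>a\<in>C. y (order a f))"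

lemma root_multiplicity_fps_insert:
  fixes C :: "'a::{field,finite} set" and y :: "nat \<Rightarrow> 'b::comm_ring_1"
  assumes "b \<notin> C"
  shows "root_multiplicity_fps y (insert b C) = Abs_fps y * root_multiplicity_fps y C"
proof (rule fps_ext)
  fix n
  let ?w = "\<lambda>f. \<Prod>a\<in>insert b C. y (order a f)"
  have weight: "?w ([:-b, 1:] ^ i * g) = y i * (\<Prod>a\<in>C. y (order a g))"
    if "g \<in> monic_with_roots_in C m" for i g m
  proof -
    have "g \<noteq> 0" "poly g b \<noteq> 0" using that assms by (auto simp: monic_with_roots_in_def)
    moreover have "a \<noteq> b" if "a \<in> C" for a
      using that assms by auto
    ultimately show ?thesis using assms
      unfolding order_linear_power_mult[OF \<open>g \<noteq> 0\<close>] by (simp add: order_0I cong: prod.cong)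
  qed
  have "fps_nth (Abs_fps y * root_multiplicity_fps y C) n
      = (\<Sum>i\<le>n. \<Sum>g\<in>monic_with_roots_in C (n - i). y i * (\<Prod>a\<in>C. y (order a g)))"
    by (simp add: fps_mult_nth root_multiplicity_fps_def sum_distrib_left atLeast0AtMost)
  also have "\<dots> = (\<Sum>(i, g)\<in>(SIGMA i:{..n}. monic_with_roots_in C (n - i)).
                      y i * (\<Prod>a\<in>C. y (order a g)))"
    by (rule sum.Sigma) (auto simp: finite_monic_with_roots_in)
  also have "\<dots> = (\<Sum>(i, g)\<in>(SIGMA i:{..n}. monic_with_roots_in C (n - i)). ?w ([:-b, 1:] ^ i * g))"
  proof (rule sum.cong[OF refl], clarify)
    fix i g assume "g \<in> monic_with_roots_in C (n - i)"
    from weight[OF this, of i] show "y i * (\<Prod>a\<in>C. y (order a g)) = ?w ([:-b, 1:] ^ i * g)" by simp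
  qed
  also have "\<dots> = (\<Sum>f\<in>monic_with_roots_in (insert b C) n. ?w f)"
    using sum.reindex_bij_betw[OF bij_betw_linear_power_mult[OF assms, of n], of ?w]
    by (simp add: case_prod_unfold)
  finally show "fps_nth (root_multiplicity_fps y (insert b C)) n
                 = fps_nth (Abs_fps y * root_multiplicity_fps y C) n"
    by (simp add: root_multiplicity_fps_def)
qed

lemma root_multiplicity_fps_UNIV:
  "root_multiplicity_fps y (UNIV :: 'a::{field,finite} set)
     = Abs_fps y ^ card (UNIV :: 'a set) * root_multiplicity_fps y ({} :: 'a set)"
proof -
  have "root_multiplicity_fps y C = Abs_fps y ^ card C * root_multiplicity_fps y ({} :: 'a set)"
    for C :: "'a set"
    using finite[of C]
    by (induction C rule: finite_induct) (simp_all add: root_multiplicity_fps_insert mult.assoc)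
  then show ?thesis .
qed

lemma geometric_fps:
  "(1 - fps_const c * fps_X) * Abs_fps (\<lambda>n. c ^ n) = (1 :: 'b::comm_ring_1 fps)"
proof (rule fps_ext)
  fix n
  show "fps_nth ((1 - fps_const c * fps_X) * Abs_fps (\<lambda>n. c ^ n)) n = fps_nth 1 n"
    by (cases n) (simp_all add: algebra_simps mult.assoc)
qed

lemma root_multiplicity_fps_empty:
  fixes y :: "nat \<Rightarrow> 'b::comm_ring_1"
  defines "q \<equiv> card (UNIV :: 'a::{field,finite} set)"
  shows "root_multiplicity_fps y ({} :: 'a set)
           = (1 - fps_X) ^ q * fps_right_inverse (1 - of_nat q * fps_X) 1"
proof -
  let ?R0 = "root_multiplicity_fps y ({} :: 'a set)" and ?G = "Abs_fps (\<lambda>n. of_nat q ^ n) :: 'b fps"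
  have "root_multiplicity_fps (\<lambda>_. 1) (UNIV :: 'a set) = ?G"
    by (simp add: root_multiplicity_fps_def card_monic_with_roots_in_UNIV q_def)
  moreover have "root_multiplicity_fps (\<lambda>_. 1) ({} :: 'a set) = ?R0"
    by (simp add: root_multiplicity_fps_def)
  ultimately have "?G = Abs_fps (\<lambda>_. 1) ^ q * ?R0"
    using root_multiplicity_fps_UNIV[where y = "\<lambda>_. 1 :: 'b", where 'a = 'a] by (simp add: q_def)
  then have "(1 - fps_X) ^ q * ?G = ((1 - fps_X) * Abs_fps (\<lambda>_. 1)) ^ q * ?R0"
    by (simp add: power_mult_distrib mult.assoc)
  also have "(1 - fps_X) * Abs_fps (\<lambda>_. 1) = (1 :: 'b fps)"
    using geometric_fps[of 1] by simp
  finally have R0: "?R0 = (1 - fps_X) ^ q * ?G" by simp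
  let ?inv = "fps_right_inverse (1 - of_nat q * fps_X) 1 :: 'b fps"
  have G: "(1 - of_nat q * fps_X) * ?G = 1"
    using geometric_fps[of "of_nat q"] by (simp add: fps_of_nat)
  have "?G = ?G * ((1 - of_nat q * fps_X) * ?inv)" by (simp add: fps_right_inverse)
  also have "\<dots> = ((1 - of_nat q * fps_X) * ?G) * ?inv" by (simp only: mult_ac)
  also have "\<dots> = ?inv" by (simp add: G)
  finally have "?G = ?inv" .
  with R0 show ?thesis by simp
qed

lemma sum_splitting_types_eq_root_multiplicity:
  fixes F :: "'a::{field,finite} itself" and y :: "nat \<Rightarrow> 'b::comm_ring_1"
  assumes "y 0 = 1"
  shows "(\<Sum>\<sigma>\<in>splitting_types n. of_nat (N_split F \<sigma>) * linear_weight y \<sigma>)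
           = fps_nth (root_multiplicity_fps y (UNIV :: 'a set)) n"
proof -
  let ?M = "monic_with_roots_in (UNIV :: 'a set) n"
  have fibre: "{f :: 'a poly. has_splitting_type f \<sigma>} = {f \<in> ?M. splitting_type f = \<sigma>}"
    if "\<sigma> \<in> splitting_types n" for \<sigma>
  proof -
    have "degree f = n" if "monic f" "splitting_type f \<in> splitting_types n" for f :: "'a poly"
      using splitting_type_in_splitting_types[OF that(1)] that(2) by (simp add: splitting_types_def)
    with \<open>\<sigma> \<in> splitting_types n\<close> show ?thesis
      by (auto simp: has_splitting_type_iff monic_with_roots_in_def)
  qed
  have "(\<Sum>\<sigma>\<in>splitting_types n. of_nat (N_split F \<sigma>) * linear_weight y \<sigma>)
      = (\<Sum>\<sigma>\<in>splitting_types n. \<Sum>f\<in>{f \<in> ?M. splitting_type f = \<sigma>}. linear_weight y (splitting_type f))"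
    by (intro sum.cong refl) (simp add: N_split_def fibre)
  also have "\<dots> = (\<Sum>f\<in>?M. linear_weight y (splitting_type f))"
    using splitting_type_in_splitting_types
    by (intro sum.group finite_splitting_types finite_monic_with_roots_in)
       (auto simp: monic_with_roots_in_def)
  also have "\<dots> = (\<Sum>f\<in>?M. \<Prod>a\<in>UNIV. y (order a f))"
  proof (rule sum.cong[OF refl])
    fix f assume "f \<in> ?M"
    then have "monic f" by (rule monic_with_roots_inD)
    with assms show "linear_weight y (splitting_type f) = (\<Prod>a\<in>UNIV. y (order a f))"
      by (rule linear_weight_splitting_type[where y = y])
  qed
  also have "\<dots> = fps_nth (root_multiplicity_fps y (UNIV :: 'a set)) n"
    by (simp add: root_multiplicity_fps_def)
  finally show ?thesis .
qed

theorem corollary2p3: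
  fixes p :: nat and F :: "'a::{field,finite} itself"
  assumes "prime p" and "card (UNIV :: 'a set) = p"
  shows "Abs_fps (\<lambda>n. \<Sum>\<sigma> \<in> splitting_types n.
            of_nat (N_split F \<sigma>) *
            prod_mset (image_mset (\<lambda>(d,e). xvar e) (filter_mset (\<lambda>(d,e). d = 1) \<sigma>)))
       = (Abs_fps xvar) ^ p * (1 - fps_X) ^ p * fps_right_inverse (1 - of_nat p * fps_X) 1"
proof -
  have "xvar 0 = 1" by (simp add: xvar_def)
  then have "Abs_fps (\<lambda>n. \<Sum>\<sigma> \<in> splitting_types n.
            of_nat (N_split F \<sigma>) *
            prod_mset (image_mset (\<lambda>(d,e). xvar e) (filter_mset (\<lambda>(d,e). d = 1) \<sigma>)))
      = root_multiplicity_fps xvar (UNIV :: 'a set)"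
    using sum_splitting_types_eq_root_multiplicity[of xvar F]
    by (intro fps_ext) (simp add: linear_weight_def)
  also have "\<dots> = Abs_fps xvar ^ p * root_multiplicity_fps xvar ({} :: 'a set)"
    using root_multiplicity_fps_UNIV[of xvar, where 'a = 'a] assms(2) by simp
  finally show ?thesis using assms(2) by (simp add: root_multiplicity_fps_empty mult.assoc)
qed

end
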